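(* Let $h'_1,h'_2,l'_1,l'_2,\alpha'_1,\alpha'_2,\beta'\in\mathbb{C}$ and assume that $N:=(h'_1-h'_2-l'_1+l'_2+\alpha'_1-\alpha'_2+\beta'-2)/2$ is a non-negative integer and $\beta'\notin\{1,\dots,N\}$. Let $c_n(E')$ $(n=0,\dots,N)$ and $c(E')$ be the polynomials of the context constructed from the parameters $h''_1=l'_1,\ l''_1=h'_1,\ h''_2=h'_2,\ l''_2=l'_2,\ \alpha''_1=\alpha'_1,\ \alpha''_2=\alpha'_2,\ \beta''=\beta'$ (with this $N$), and let $E'_0$ satisfy $c(E'_0)=0$. Then the functions $$h_1(s)=s^{(h'_1+h'_2-l'_1-l'_2-\alpha'_1-\alpha'_2-\beta'+2)/2}\frac{(s/(q^{l'_1-1/2}t_1);q)_\infty}{(s/(q^{h'_1-1/2}t_1);q)_\infty}\sum_{n=0}^{N}c_n(E'_0)s^{n},$$ $$h_2(s)=s^{-\alpha'_2-N}\frac{(q^{h'_1+1/2}t_1/s;q)_\infty}{(q^{l'_1+1/2}t_1/s;q)_\infty}\sum_{n=0}^{N}c_n(E'_0)s^{n}$$ satisfy $A^{\langle4\rangle}(s;h'_1,h'_2,l'_1,l'_2,\alpha'_1,\alpha'_2,\beta')h_i(s)=E'_0h_i(s)$ for $i=1,2$.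
   Context: $q\in\mathbb{C}$ with $0<|q|<1$; powers $q^a$ via a fixed branch of $\log q$, and $s^{a}$ a fixed branch with $(qs)^a=q^as^a$. $(a;q)_\infty=\prod_{k\ge0}(1-aq^k)$, $(a;q)_n=(a;q)_\infty/(aq^n;q)_\infty$ for $n\in\mathbb{Z}$, $(a_1,\dots,a_m;q)_n=\prod_i(a_i;q)_n$. $t_1,t_2$ are fixed non-zero constants; $T_s^{\pm1}g(s)=g(q^{\pm1}s)$ and $A^{\langle 4\rangle}(s;h_1,h_2,l_1,l_2,\alpha_1,\alpha_2,\beta)=s^{-1}(s-q^{h_1+1/2}t_1)(s-q^{h_2+1/2}t_2)T_s^{-1}+q^{\alpha_1+\alpha_2}s^{-1}(s-q^{l_1-1/2}t_1)(s-q^{l_2-1/2}t_2)T_s-\{(q^{\alpha_1}+q^{\alpha_2})s+q^{(h_1+h_2+l_1+l_2+\alpha_1+\alpha_2)/2}(q^{\beta/2}+q^{-\beta/2})t_1t_2s^{-1}\}$. Polynomials: given $(h''_1,h''_2,l''_1,l''_2,\alpha''_1,\alpha''_2,\beta'')$ and $N$, put $\lambda''_1=(h''_1+h''_2-l''_1-l''_2-\alpha''_1-\alpha''_2-\beta''+2)/2$, $x''_n=t_1t_2q^{1-n+h''_1+h''_2-\lambda''_1}(1-q^{n})(1-q^{n-\beta''})$, $y''_n=q^{3/2-n-\lambda''_1}(q^{h''_1}t_1+q^{h''_2}t_2)+q^{n-3/2+\lambda''_1+\alpha''_1+\alpha''_2}(q^{l''_1}t_1+q^{l''_2}t_2)$,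 $z''_n=q^{2-n-\lambda''_1}(1-q^{n-2+\lambda''_1+\alpha''_1})(1-q^{n-2+\lambda''_1+\alpha''_2})$; $c_{-1}=0$, $c_0=1$, $c_n(E'')x''_n=c_{n-1}(E'')(E''+y''_n)-c_{n-2}(E'')z''_n$ ($1\le n\le N$), $c(E'')=x''_1\cdots x''_N[c_N(E'')(E''+y''_{N+1})-c_{N-1}(E'')z''_{N+1}]$. *)

theory Defs
  imports "HOL-Analysis.Analysis"
begin

text \<open>Powers of q through a fixed branch L of log q (exp L = q): q^a = exp (a L).\<close>
definition qpw :: "complex \<Rightarrow> complex \<Rightarrow> complex" where
  "qpw L a = exp (a * L)"

definition qpoch_inf :: "complex \<Rightarrow> complex \<Rightarrow> complex" where
  "qpoch_inf q a = (\<Prod>k. 1 - a * q ^ k)"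

text \<open>The operator A^<4>(s; h1,h2,l1,l2,a1,a2,b) applied to g, evaluated at s.
  T_s^{-1} g(s) = g(s/q), T_s g(s) = g(q s).\<close>
definition A4 ::
  "complex \<Rightarrow> complex \<Rightarrow> complex \<Rightarrow> complex \<Rightarrow>
   complex \<Rightarrow> complex \<Rightarrow> complex \<Rightarrow> complex \<Rightarrow> complex \<Rightarrow> complex \<Rightarrow> complex \<Rightarrow>
   (complex \<Rightarrow> complex) \<Rightarrow> complex \<Rightarrow> complex" where
  "A4 q L t1 t2 h1 h2 l1 l2 a1 a2 b g s =
     (s - qpw L (h1 + 1/2) * t1) * (s - qpw L (h2 + 1/2) * t2) / s * g (s / q)
   + qpw L (a1 + a2) * (s - qpw L (l1 - 1/2) * t1) * (s - qpw L (l2 - 1/2) * t2) / s * g (q * s)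
   - ((qpw L a1 + qpw L a2) * s
      + qpw L ((h1 + h2 + l1 + l2 + a1 + a2) / 2) * (qpw L (b / 2) + qpw L (- b / 2)) * t1 * t2 / s)
     * g s"

definition lam1 :: "complex \<Rightarrow> complex \<Rightarrow> complex \<Rightarrow> complex \<Rightarrow> complex \<Rightarrow> complex \<Rightarrow> complex \<Rightarrow> complex" where
  "lam1 h1 h2 l1 l2 a1 a2 b = (h1 + h2 - l1 - l2 - a1 - a2 - b + 2) / 2"

definition xco :: "complex \<Rightarrow> complex \<Rightarrow> complex \<Rightarrow> complex \<Rightarrow> complex \<Rightarrow> complex \<Rightarrow> complex \<Rightarrow>
    complex \<Rightarrow> complex \<Rightarrow> complex \<Rightarrow> complex \<Rightarrow> nat \<Rightarrow> complex" where
  "xco q L t1 t2 h1 h2 l1 l2 a1 a2 b n =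
     t1 * t2 * qpw L (1 - of_nat n + h1 + h2 - lam1 h1 h2 l1 l2 a1 a2 b)
       * (1 - q ^ n) * (1 - qpw L (of_nat n - b))"

definition yco :: "complex \<Rightarrow> complex \<Rightarrow> complex \<Rightarrow> complex \<Rightarrow> complex \<Rightarrow> complex \<Rightarrow> complex \<Rightarrow>
    complex \<Rightarrow> complex \<Rightarrow> complex \<Rightarrow> complex \<Rightarrow> nat \<Rightarrow> complex" where
  "yco q L t1 t2 h1 h2 l1 l2 a1 a2 b n =
     qpw L (3/2 - of_nat n - lam1 h1 h2 l1 l2 a1 a2 b) * (qpw L h1 * t1 + qpw L h2 * t2)
   + qpw L (of_nat n - 3/2 + lam1 h1 h2 l1 l2 a1 a2 b + a1 + a2) * (qpw L l1 * t1 + qpw L l2 * t2)"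

definition zco :: "complex \<Rightarrow> complex \<Rightarrow> complex \<Rightarrow> complex \<Rightarrow> complex \<Rightarrow> complex \<Rightarrow> complex \<Rightarrow>
    complex \<Rightarrow> complex \<Rightarrow> complex \<Rightarrow> complex \<Rightarrow> nat \<Rightarrow> complex" where
  "zco q L t1 t2 h1 h2 l1 l2 a1 a2 b n =
     qpw L (2 - of_nat n - lam1 h1 h2 l1 l2 a1 a2 b)
       * (1 - qpw L (of_nat n - 2 + lam1 h1 h2 l1 l2 a1 a2 b + a1))
       * (1 - qpw L (of_nat n - 2 + lam1 h1 h2 l1 l2 a1 a2 b + a2))"

fun crec :: "(nat \<Rightarrow> complex) \<Rightarrow> (nat \<Rightarrow> complex) \<Rightarrow> (nat \<Rightarrow> complex) \<Rightarrow> complex \<Rightarrow> nat \<Rightarrow> complex" where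
  "crec x y z E 0 = 1"
| "crec x y z E (Suc 0) = (E + y 1) / x 1"
| "crec x y z E (Suc (Suc n)) =
     (crec x y z E (Suc n) * (E + y (n + 2)) - crec x y z E n * z (n + 2)) / x (n + 2)"

definition crec_prev :: "(nat \<Rightarrow> complex) \<Rightarrow> (nat \<Rightarrow> complex) \<Rightarrow> (nat \<Rightarrow> complex) \<Rightarrow> complex \<Rightarrow> nat \<Rightarrow> complex" where
  "crec_prev x y z E n = (if n = 0 then 0 else crec x y z E (n - 1))"

definition cn :: "complex \<Rightarrow> complex \<Rightarrow> complex \<Rightarrow> complex \<Rightarrow> complex \<Rightarrow> complex \<Rightarrow> complex \<Rightarrow>
    complex \<Rightarrow> complex \<Rightarrow> complex \<Rightarrow> complex \<Rightarrow> complex \<Rightarrow> nat \<Rightarrow> complex" where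
  "cn q L t1 t2 h1 h2 l1 l2 a1 a2 b E n =
     crec (xco q L t1 t2 h1 h2 l1 l2 a1 a2 b) (yco q L t1 t2 h1 h2 l1 l2 a1 a2 b)
          (zco q L t1 t2 h1 h2 l1 l2 a1 a2 b) E n"

definition cpoly :: "complex \<Rightarrow> complex \<Rightarrow> complex \<Rightarrow> complex \<Rightarrow> complex \<Rightarrow> complex \<Rightarrow> complex \<Rightarrow>
    complex \<Rightarrow> complex \<Rightarrow> complex \<Rightarrow> complex \<Rightarrow> nat \<Rightarrow> complex \<Rightarrow> complex" where
  "cpoly q L t1 t2 h1 h2 l1 l2 a1 a2 b N E =
     (let x = xco q L t1 t2 h1 h2 l1 l2 a1 a2 b;
          y = yco q L t1 t2 h1 h2 l1 l2 a1 a2 b;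
          z = zco q L t1 t2 h1 h2 l1 l2 a1 a2 b
      in (\<Prod>n\<in>{1..N}. x n) *
         (crec x y z E N * (E + y (N + 1)) - crec_prev x y z E N * z (N + 1)))"

end

theory Submission
  imports Defs
begin

text \<open>
  Write each candidate eigenfunction as \<open>f = G \<cdot> P\<close> with \<open>P(s) = \<Sum> c\<^sub>n s\<^sup>n\<close>. The gauge factor
  \<open>G\<close> (a power of \<open>s\<close> times a ratio of infinite q-Pochhammer symbols) satisfies first-order
  q-difference equations, and by \<open>(a;q)\<^sub>\<infinity> = (1 - a) (qa;q)\<^sub>\<infinity>\<close> these trade the factor
  \<open>s - q\<^bsup>h1+1/2\<^esup> t1\<close> in front of \<open>T\<^sub>s\<^sup>-\<^sup>1\<close> for \<open>s - q\<^bsup>l1+1/2\<^esup> t1\<close>, and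
  \<open>s - q\<^bsup>l1-1/2\<^esup> t1\<close> in front of \<open>T\<^sub>s\<close> for \<open>s - q\<^bsup>h1-1/2\<^esup> t1\<close>. For both gauge factors
  \<open>A f = E f\<close> thus becomes the same second-order q-difference equation for \<open>P\<close>, in which
  \<open>h1\<close> and \<open>l1\<close> are exchanged. Its coefficient of \<open>s\<^sup>n\<^sup>+\<^sup>1\<close> is the three-term recurrence
  defining \<open>c\<^sub>n\<close> for the exchanged parameters; the equation terminates in degree \<open>N\<close> because
  \<open>z\<^sub>N\<^sub>+\<^sub>2 = 0\<close>, and its last coefficient is \<open>-c(E)/(x\<^sub>1\<cdots>x\<^sub>N)\<close>, which vanishes at \<open>E\<^sub>0\<close>.
\<close>

section \<open>Powers of q and the q-Pochhammer symbol\<close>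

lemma qpw_add: "qpw L (a + b) = qpw L a * qpw L b"
  by (simp add: qpw_def distrib_right exp_add)

lemma qpw_diff: "qpw L (a - b) = qpw L a / qpw L b"
  by (simp add: qpw_def left_diff_distrib exp_diff)

lemma qpw_nonzero [simp]: "qpw L a \<noteq> 0"
  by (simp add: qpw_def)

lemma qpw_of_nat: "qpw L (of_nat n) = exp L ^ n"
  by (simp add: qpw_def exp_of_nat_mult[symmetric] mult.commute)

lemma qpw_half_shift:
  assumes "exp L = q"
  shows "qpw L (a + 1/2) * t = q * (qpw L (a - 1/2) * t)"
proof -
  have "qpw L (a + 1/2) = qpw L (a - 1/2) * qpw L 1"
    unfolding qpw_add[symmetric] by (rule arg_cong[where f = "qpw L"]) simp
  then show ?thesis
    using assms by (simp add: qpw_def)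
qed

lemma qpoch_inf_convergent:
  fixes q a :: complex
  assumes "cmod q < 1"
  shows "convergent_prod (\<lambda>k. 1 - a * q ^ k)"
proof -
  have "summable (\<lambda>k. norm ((1 - a * q ^ k) - 1))"
    using assms by (simp add: norm_mult norm_power summable_mult summable_geometric)
  then show ?thesis
    by (intro abs_convergent_prod_imp_convergent_prod summable_imp_abs_convergent_prod)
qed

lemma qpoch_inf_rec:
  fixes q a :: complex
  assumes "cmod q < 1"
  shows "qpoch_inf q a = (1 - a) * qpoch_inf q (q * a)"
proof -
  have "(\<lambda>k. 1 - a * q ^ k) has_prod ((\<Prod>k<1. 1 - a * q ^ k) * (\<Prod>k. 1 - a * q ^ (k + 1)))"
    by (rule has_prod_ignore_initial_segment'[OF qpoch_inf_convergent[OF assms]])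
  then have "qpoch_inf q a = (1 - a) * (\<Prod>k. 1 - a * q ^ (k + 1))"
    unfolding qpoch_inf_def by (simp add: has_prod_iff)
  also have "(\<lambda>k. 1 - a * q ^ (k + 1)) = (\<lambda>k. 1 - (q * a) * q ^ k)"
    by (simp add: mult_ac)
  finally show ?thesis
    unfolding qpoch_inf_def .
qed

section \<open>Gauge factors\<close>

lemma shift_down:
  fixes q s Q :: complex and g :: "complex \<Rightarrow> complex"
  assumes "q \<noteq> 0" "s \<noteq> 0" "Q \<noteq> 0" and "\<And>z. z \<noteq> 0 \<Longrightarrow> g (q * z) = Q * g z"
  shows "g (s / q) = g s / Q"
  using assms(4)[of "s / q"] assms(1-3) by (simp add: field_simps)

lemma gauge_factor_shifts:
  fixes q u v s Q :: complex and g :: "complex \<Rightarrow> complex"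
  assumes q: "cmod q < 1" "q \<noteq> 0" and uv: "u \<noteq> 0" "v \<noteq> 0" and s: "s \<noteq> 0" and Q: "Q \<noteq> 0"
    and g: "\<And>z. z \<noteq> 0 \<Longrightarrow> g (q * z) = Q * g z"
    and den: "\<forall>w\<in>{s / q, s, q * s}. qpoch_inf q (w / v) \<noteq> 0"
  defines "G \<equiv> \<lambda>w. g w * qpoch_inf q (w / u) / qpoch_inf q (w / v)"
  shows "(s - q * v) * G (s / q) = v / (u * Q) * (s - q * u) * G s"
    and "(s - u) * G (q * s) = Q * u / v * (s - v) * G s"
proof -
  have g_down: "g (s / q) = g s / Q"
    using q(2) s Q g by (rule shift_down)
  have rec: "qpoch_inf q (w / q / c) = (1 - w / q / c) * qpoch_inf q (w / c)"
    "qpoch_inf q (w / c) = (1 - w / c) * qpoch_inf q (q * w / c)" for w c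
    using qpoch_inf_rec[OF q(1), of "w / q / c"] qpoch_inf_rec[OF q(1), of "w / c"] q(2) by simp_all
  have "1 - s / q / v \<noteq> 0" "qpoch_inf q (s / v) \<noteq> 0"
    using den rec(1)[of s v] by auto
  then show "(s - q * v) * G (s / q) = v / (u * Q) * (s - q * u) * G s"
    unfolding G_def unfolding g_down rec(1)[of s u] rec(1)[of s v]
    using q(2) uv Q by (simp add: field_simps)
  have "1 - s / v \<noteq> 0" "qpoch_inf q (q * s / v) \<noteq> 0"
    using den rec(2)[of s v] by auto
  then show "(s - u) * G (q * s) = Q * u / v * (s - v) * G s"
    unfolding G_def unfolding g[OF s] rec(2)[of s u] rec(2)[of s v]
    using uv by (simp add: field_simps)
qed

lemma reciprocal_gauge_factor_shifts:
  fixes q u v s Q :: complex and g :: "complex \<Rightarrow> complex"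
  assumes q: "cmod q < 1" "q \<noteq> 0" and s: "s \<noteq> 0" and Q: "Q \<noteq> 0"
    and g: "\<And>z. z \<noteq> 0 \<Longrightarrow> g (q * z) = Q * g z"
    and den: "\<forall>w\<in>{s / q, s, q * s}. qpoch_inf q (q * u / w) \<noteq> 0"
  defines "G \<equiv> \<lambda>w. g w * qpoch_inf q (q * v / w) / qpoch_inf q (q * u / w)"
  shows "(s - q * v) * G (s / q) = 1 / Q * (s - q * u) * G s"
    and "(s - u) * G (q * s) = Q * (s - v) * G s"
proof -
  have g_down: "g (s / q) = g s / Q"
    using q(2) s Q g by (rule shift_down)
  have rec: "qpoch_inf q (q * c / s) = (1 - q * c / s) * qpoch_inf q (q * c / (s / q))"
    "qpoch_inf q (q * c / (q * s)) = (1 - c / s) * qpoch_inf q (q * c / s)" for c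
    using qpoch_inf_rec[OF q(1), of "q * c / s"] qpoch_inf_rec[OF q(1), of "c / s"] q(2)
    by (simp_all add: field_simps)
  have "1 - q * u / s \<noteq> 0" "qpoch_inf q (q * u / (s / q)) \<noteq> 0"
    using den rec(1)[of u] by auto
  then show "(s - q * v) * G (s / q) = 1 / Q * (s - q * u) * G s"
    unfolding G_def unfolding g_down rec(1)[of u] rec(1)[of v]
    using s Q by (simp add: field_simps)
  have "1 - u / s \<noteq> 0" "qpoch_inf q (q * u / s) \<noteq> 0"
    using den rec(2)[of u] by auto
  then show "(s - u) * G (q * s) = Q * (s - v) * G s"
    unfolding G_def unfolding g[OF s] rec(2)[of u] rec(2)[of v]
    using s by (simp add: field_simps)
qed

text \<open>
  \<open>s\<close> times \<open>A\<close> conjugated by a gauge factor (see \<open>A4_gauge_transform\<close>): the parameters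
  \<open>h1\<close> and \<open>l1\<close> are exchanged in the coefficients of the two shifts, and \<open>K1\<close>, \<open>K2\<close> are the
  constants contributed by the gauge factor.
\<close>
definition gauged_A4 ::
  "complex \<Rightarrow> complex \<Rightarrow> complex \<Rightarrow> complex \<Rightarrow>
   complex \<Rightarrow> complex \<Rightarrow> complex \<Rightarrow> complex \<Rightarrow> complex \<Rightarrow> complex \<Rightarrow> complex \<Rightarrow>
   complex \<Rightarrow> complex \<Rightarrow> (complex \<Rightarrow> complex) \<Rightarrow> complex \<Rightarrow> complex" where
  "gauged_A4 q L t1 t2 h1 h2 l1 l2 a1 a2 b K1 K2 P s =
     K1 * (s - qpw L (l1 + 1/2) * t1) * (s - qpw L (h2 + 1/2) * t2) * P (s / q)
   + K2 * (s - qpw L (h1 - 1/2) * t1) * (s - qpw L (l2 - 1/2) * t2) * P (q * s)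
   - ((qpw L a1 + qpw L a2) * s\<^sup>2
      + qpw L ((h1 + h2 + l1 + l2 + a1 + a2) / 2) * (qpw L (b / 2) + qpw L (- b / 2)) * t1 * t2)
     * P s"

lemma A4_gauge_transform:
  fixes G P :: "complex \<Rightarrow> complex"
  assumes Lq: "exp L = q" and s: "s \<noteq> 0"
    and down: "(s - q * (qpw L (h1 - 1/2) * t1)) * G (s / q) = K1 * (s - q * (qpw L (l1 - 1/2) * t1)) * G s"
    and up: "(s - qpw L (l1 - 1/2) * t1) * G (q * s) = K2 * (s - qpw L (h1 - 1/2) * t1) * G s"
  shows "A4 q L t1 t2 h1 h2 l1 l2 a1 a2 b (\<lambda>w. G w * P w) s - E * (G s * P s)
    = G s / s * (gauged_A4 q L t1 t2 h1 h2 l1 l2 a1 a2 b K1 (qpw L (a1 + a2) * K2) P s - E * s * P s)"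
proof -
  have "A4 q L t1 t2 h1 h2 l1 l2 a1 a2 b (\<lambda>w. G w * P w) s * s - E * (G s * P s) * s
    = G s * (gauged_A4 q L t1 t2 h1 h2 l1 l2 a1 a2 b K1 (qpw L (a1 + a2) * K2) P s - E * s * P s)"
    unfolding A4_def gauged_A4_def qpw_half_shift[OF Lq] using s down up
    by (simp add: field_simps power2_eq_square) algebra
  then show ?thesis
    using s by (simp add: field_simps)
qed

section \<open>The terminating polynomial solution\<close>

lemma q_difference_of_poly:
  fixes c :: "nat \<Rightarrow> complex" and q s K1 K2 \<alpha> \<beta> \<gamma> \<delta> m k E :: complex
  assumes "q \<noteq> 0"
  shows "K1 * (s - \<alpha>) * (s - \<beta>) * (\<Sum>n\<le>N. c n * (s / q) ^ n)
      + K2 * (s - \<gamma>) * (s - \<delta>) * (\<Sum>n\<le>N. c n * (q * s) ^ n)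
      - (m * s\<^sup>2 + k + E * s) * (\<Sum>n\<le>N. c n * s ^ n)
    = (\<Sum>n\<le>N. c n * (s ^ (n + 2) * (K1 / q ^ n + K2 * q ^ n - m)
        - s ^ (n + 1) * (E + (K1 * (\<alpha> + \<beta>) / q ^ n + K2 * (\<gamma> + \<delta>) * q ^ n))
        + s ^ n * (K1 * \<alpha> * \<beta> / q ^ n + K2 * \<gamma> * \<delta> * q ^ n - k)))"
  unfolding sum_distrib_left sum_subtractf[symmetric] sum.distrib[symmetric]
  using assms by (intro sum.cong refl) (simp add: power_divide power_mult_distrib field_simps power2_eq_square)

lemma three_term_recurrence_sum:
  fixes a b e c :: "nat \<Rightarrow> complex" and s :: complex
  assumes e0: "e 0 * c 0 = 0"
    and rec: "\<And>n. 1 \<le> n \<Longrightarrow> n \<le> N \<Longrightarrow>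
      e n * c n - b (n - 1) * c (n - 1) + (if 2 \<le> n then a (n - 2) * c (n - 2) else 0) = 0"
    and "M \<le> N"
  shows "(\<Sum>n\<le>M. c n * (s ^ (n + 2) * a n - s ^ (n + 1) * b n + s ^ n * e n))
    = s ^ (M + 1) * ((if 1 \<le> M then a (M - 1) * c (M - 1) else 0) - b M * c M) + s ^ (M + 2) * (a M * c M)"
  using \<open>M \<le> N\<close>
proof (induction M)
  case 0
  then show ?case
    using e0 by (simp add: algebra_simps)
next
  case (Suc M)
  have "(if 1 \<le> M then a (M - 1) * c (M - 1) else 0) - b M * c M + e (Suc M) * c (Suc M) = 0"
    using rec[of "Suc M"] Suc.prems by (cases M) (auto simp: algebra_simps)
  moreover have "(\<Sum>n\<le>Suc M. c n * (s ^ (n + 2) * a n - s ^ (n + 1) * b n + s ^ n * e n))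
    = s ^ (M + 1) * ((if 1 \<le> M then a (M - 1) * c (M - 1) else 0) - b M * c M + e (Suc M) * c (Suc M))
      + s ^ (Suc M + 1) * (a M * c M - b (Suc M) * c (Suc M)) + s ^ (Suc M + 2) * (a (Suc M) * c (Suc M))"
    using Suc by (simp add: algebra_simps)
  ultimately show ?case
    by simp
qed

lemma crec_recurrence:
  assumes "1 \<le> n" and "x n \<noteq> 0"
  shows "x n * crec x y z E n = (E + y n) * crec x y z E (n - 1) - z n * crec_prev x y z E (n - 1)"
proof (cases n)
  case 0
  with assms(1) show ?thesis by simp
next
  case (Suc m)
  with assms(2) show ?thesis
    by (cases m) (simp_all add: crec_prev_def field_simps numeral_2_eq_2)
qed

lemma crec_terminating_sum:
  fixes x y z :: "nat \<Rightarrow> complex"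
  assumes x0: "x 0 = 0" and x_nz: "\<forall>n\<in>{1..N}. x n \<noteq> 0" and z: "z (N + 2) = 0"
    and E: "crec x y z E N * (E + y (N + 1)) - crec_prev x y z E N * z (N + 1) = 0"
  shows "(\<Sum>n\<le>N. crec x y z E n * (s ^ (n + 2) * z (n + 2) - s ^ (n + 1) * (E + y (n + 1)) + s ^ n * x n)) = 0"
proof -
  define c where "c = crec x y z E"
  have "(\<Sum>n\<le>N. c n * (s ^ (n + 2) * z (n + 2) - s ^ (n + 1) * (E + y (n + 1)) + s ^ n * x n))
    = s ^ (N + 1) * ((if 1 \<le> N then z (N - 1 + 2) * c (N - 1) else 0) - (E + y (N + 1)) * c N)
      + s ^ (N + 2) * (z (N + 2) * c N)"
  proof (rule three_term_recurrence_sum[where a = "\<lambda>n. z (n + 2)" and b = "\<lambda>n. E + y (n + 1)", OF _ _ order_refl])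
    show "x 0 * c 0 = 0"
      using x0 by simp
    fix n
    assume "1 \<le> n" "n \<le> N"
    then have "x n * c n = (E + y n) * c (n - 1) - z n * crec_prev x y z E (n - 1)"
      unfolding c_def using x_nz by (intro crec_recurrence) auto
    moreover have "n - 1 + 1 = n" "2 \<le> n \<Longrightarrow> n - 2 + 2 = n"
      using \<open>1 \<le> n\<close> by simp_all
    ultimately show "x n * c n - (E + y (n - 1 + 1)) * c (n - 1)
        + (if 2 \<le> n then z (n - 2 + 2) * c (n - 2) else 0) = 0"
      by (auto simp: crec_prev_def c_def numeral_2_eq_2)
  qed
  also have "\<dots> = 0"
    using z E by (cases N) (simp_all add: crec_prev_def c_def algebra_simps)
  finally show ?thesis
    unfolding c_def .
qed

lemma lam1_swapped:
  assumes "(h1 - h2 - l1 + l2 + a1 - a2 + b - 2) / 2 = of_nat N"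
  shows "lam1 l1 h2 h1 l2 a1 a2 b = - of_nat N - a2"
  using assms unfolding lam1_def by (simp add: field_simps)

text \<open>
  With \<open>h1\<close> and \<open>l1\<close> exchanged, \<open>x\<^sub>n\<close>, \<open>y\<^sub>n\<^sub>+\<^sub>1\<close> and \<open>z\<^sub>n\<^sub>+\<^sub>2\<close> are exactly the coefficients of
  \<open>s\<^sup>n\<close>, \<open>s\<^sup>n\<^sup>+\<^sup>1\<close> and \<open>s\<^sup>n\<^sup>+\<^sup>2\<close> that \<open>q_difference_of_poly\<close> produces for the gauged operator.
\<close>
lemma xco_swapped:
  assumes Lq: "exp L = q" and N: "(h1 - h2 - l1 + l2 + a1 - a2 + b - 2) / 2 = of_nat N"
  shows "xco q L t1 t2 l1 h2 h1 l2 a1 a2 b n =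
      qpw L (a2 + of_nat N) * (qpw L (l1 + 1/2) * t1) * (qpw L (h2 + 1/2) * t2) / q ^ n
    + qpw L (a1 - of_nat N) * (qpw L (h1 - 1/2) * t1) * (qpw L (l2 - 1/2) * t2) * q ^ n
    - qpw L ((h1 + h2 + l1 + l2 + a1 + a2) / 2) * (qpw L (b / 2) + qpw L (- b / 2)) * t1 * t2"
proof -
  define A where "A = of_nat N + 1 + h2 + l1 + a2"
  have h1: "h1 = 2 * of_nat N + 2 + h2 + l1 - l2 - a1 + a2 - b"
    using N by (simp add: field_simps)
  have qn: "q ^ n = qpw L (of_nat n)"
    by (simp add: qpw_of_nat Lq)
  have e1: "qpw L (a2 + of_nat N) * (qpw L (l1 + 1/2) * t1) * (qpw L (h2 + 1/2) * t2) = t1 * t2 * qpw L A"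
    by (simp add: A_def qpw_add[symmetric] algebra_simps)
  have e2: "qpw L (a1 - of_nat N) * (qpw L (h1 - 1/2) * t1) * (qpw L (l2 - 1/2) * t2) = t1 * t2 * (qpw L A / qpw L b)"
    by (simp add: A_def h1 qpw_add[symmetric] qpw_diff[symmetric] algebra_simps)
  have e3: "qpw L ((h1 + h2 + l1 + l2 + a1 + a2) / 2) * (qpw L (b / 2) + qpw L (- b / 2))
      = qpw L A + qpw L A / qpw L b"
    unfolding distrib_left qpw_add[symmetric] qpw_diff[symmetric]
    by (rule arg_cong2[where f = "(+)"]; rule arg_cong[where f = "qpw L"]) (simp_all add: A_def h1 field_simps)
  have e4: "xco q L t1 t2 l1 h2 h1 l2 a1 a2 b n
      = t1 * t2 * (qpw L A / q ^ n) * (1 - q ^ n) * (1 - q ^ n / qpw L b)"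
    unfolding xco_def qn qpw_diff[symmetric]
    by (simp add: A_def lam1_swapped[OF N] algebra_simps)
  show ?thesis
    using Lq unfolding e1 e2 e3 e4 by (auto simp: field_simps)
qed

lemma yco_swapped:
  assumes Lq: "exp L = q" and N: "(h1 - h2 - l1 + l2 + a1 - a2 + b - 2) / 2 = of_nat N"
  shows "yco q L t1 t2 l1 h2 h1 l2 a1 a2 b (n + 1) =
      qpw L (a2 + of_nat N) * (qpw L (l1 + 1/2) * t1 + qpw L (h2 + 1/2) * t2) / q ^ n
    + qpw L (a1 - of_nat N) * (qpw L (h1 - 1/2) * t1 + qpw L (l2 - 1/2) * t2) * q ^ n"
proof -
  have qn: "q ^ n = qpw L (of_nat n)"
    by (simp add: qpw_of_nat Lq)
  have e1: "qpw L (3/2 - of_nat (n + 1) - lam1 l1 h2 h1 l2 a1 a2 b)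
      = qpw L (a2 + of_nat N) * qpw L (1/2) / q ^ n"
    unfolding qn qpw_add[symmetric] qpw_diff[symmetric]
    by (rule arg_cong[where f = "qpw L"]) (simp add: lam1_swapped[OF N] field_simps)
  have e2: "qpw L (of_nat (n + 1) - 3/2 + lam1 l1 h2 h1 l2 a1 a2 b + a1 + a2)
      = qpw L (a1 - of_nat N) * q ^ n / qpw L (1/2)"
    unfolding qn qpw_add[symmetric] qpw_diff[symmetric]
    by (rule arg_cong[where f = "qpw L"]) (simp add: lam1_swapped[OF N] field_simps)
  show ?thesis
    using Lq unfolding yco_def e1 e2 unfolding qpw_add qpw_diff by (auto simp: field_simps)
qed

lemma zco_swapped:
  assumes Lq: "exp L = q" and N: "(h1 - h2 - l1 + l2 + a1 - a2 + b - 2) / 2 = of_nat N"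
  shows "zco q L t1 t2 l1 h2 h1 l2 a1 a2 b (n + 2) =
      qpw L (a2 + of_nat N) / q ^ n + qpw L (a1 - of_nat N) * q ^ n - (qpw L a1 + qpw L a2)"
proof -
  have qn: "\<And>k. q ^ k = qpw L (of_nat k)"
    by (simp add: qpw_of_nat Lq)
  have e1: "qpw L (2 - of_nat (n + 2) - lam1 l1 h2 h1 l2 a1 a2 b) = qpw L a2 * q ^ N / q ^ n"
    unfolding qn qpw_add[symmetric] qpw_diff[symmetric]
    by (rule arg_cong[where f = "qpw L"]) (simp add: lam1_swapped[OF N] field_simps)
  have e2: "qpw L (of_nat (n + 2) - 2 + lam1 l1 h2 h1 l2 a1 a2 b + a1)
      = qpw L a1 * q ^ n / (qpw L a2 * q ^ N)"
    unfolding qn qpw_add[symmetric] qpw_diff[symmetric]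
    by (rule arg_cong[where f = "qpw L"]) (simp add: lam1_swapped[OF N] field_simps)
  have e3: "qpw L (of_nat (n + 2) - 2 + lam1 l1 h2 h1 l2 a1 a2 b + a2) = q ^ n / q ^ N"
    unfolding qn qpw_add[symmetric] qpw_diff[symmetric]
    by (rule arg_cong[where f = "qpw L"]) (simp add: lam1_swapped[OF N] field_simps)
  show ?thesis
    using Lq unfolding zco_def e1 e2 e3 unfolding qpw_add qpw_diff qn[symmetric] by (auto simp: field_simps)
qed

lemma gauged_A4_cn_poly:
  fixes q L t1 t2 h1 h2 l1 l2 a1 a2 b E s :: complex and N :: nat
  assumes Lq: "exp L = q" and N: "(h1 - h2 - l1 + l2 + a1 - a2 + b - 2) / 2 = of_nat N"
    and x_nz: "\<forall>n\<in>{1..N}. xco q L t1 t2 l1 h2 h1 l2 a1 a2 b n \<noteq> 0"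
    and E: "cpoly q L t1 t2 l1 h2 h1 l2 a1 a2 b N E = 0"
  defines "P \<equiv> \<lambda>w. \<Sum>n\<le>N. cn q L t1 t2 l1 h2 h1 l2 a1 a2 b E n * w ^ n"
  shows "gauged_A4 q L t1 t2 h1 h2 l1 l2 a1 a2 b (qpw L (a2 + of_nat N)) (qpw L (a1 - of_nat N)) P s
    = E * s * P s"
proof -
  define x where "x = xco q L t1 t2 l1 h2 h1 l2 a1 a2 b"
  define y where "y = yco q L t1 t2 l1 h2 h1 l2 a1 a2 b"
  define z where "z = zco q L t1 t2 l1 h2 h1 l2 a1 a2 b"
  define c where "c = crec x y z E"
  have q0: "q \<noteq> 0"
    using Lq by auto
  have P: "P = (\<lambda>w. \<Sum>n\<le>N. c n * w ^ n)"
    unfolding P_def c_def x_def y_def z_def cn_def ..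
  have "gauged_A4 q L t1 t2 h1 h2 l1 l2 a1 a2 b (qpw L (a2 + of_nat N)) (qpw L (a1 - of_nat N)) P s - E * s * P s
    = qpw L (a2 + of_nat N) * (s - qpw L (l1 + 1/2) * t1) * (s - qpw L (h2 + 1/2) * t2) * (\<Sum>n\<le>N. c n * (s / q) ^ n)
      + qpw L (a1 - of_nat N) * (s - qpw L (h1 - 1/2) * t1) * (s - qpw L (l2 - 1/2) * t2) * (\<Sum>n\<le>N. c n * (q * s) ^ n)
      - ((qpw L a1 + qpw L a2) * s\<^sup>2
         + qpw L ((h1 + h2 + l1 + l2 + a1 + a2) / 2) * (qpw L (b / 2) + qpw L (- b / 2)) * t1 * t2
         + E * s) * (\<Sum>n\<le>N. c n * s ^ n)"
    unfolding gauged_A4_def P by (simp add: algebra_simps)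
  also have "\<dots> = (\<Sum>n\<le>N. c n * (s ^ (n + 2) * z (n + 2) - s ^ (n + 1) * (E + y (n + 1)) + s ^ n * x n))"
    unfolding q_difference_of_poly[OF q0]
    unfolding x_def y_def z_def xco_swapped[OF Lq N] yco_swapped[OF Lq N] zco_swapped[OF Lq N] ..
  also have "\<dots> = 0"
    unfolding c_def
  proof (rule crec_terminating_sum)
    show "x 0 = 0" "\<forall>n\<in>{1..N}. x n \<noteq> 0"
      using x_nz unfolding x_def xco_def by simp_all
    show "z (N + 2) = 0"
      unfolding z_def zco_def using lam1_swapped[OF N] by (simp add: qpw_def)
    have "(\<Prod>n\<in>{1..N}. x n) \<noteq> 0"
      using x_nz unfolding x_def by simp
    then show "crec x y z E N * (E + y (N + 1)) - crec_prev x y z E N * z (N + 1) = 0"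
      using E unfolding cpoly_def Let_def x_def[symmetric] y_def[symmetric] z_def[symmetric] by simp
  qed
  finally show ?thesis
    by simp
qed

section \<open>Eigenfunctions of the operator\<close>

lemma A4_eigenfunction_of_gauge_shifts:
  fixes G :: "complex \<Rightarrow> complex"
  assumes Lq: "exp L = q" and N: "(h1 - h2 - l1 + l2 + a1 - a2 + b - 2) / 2 = of_nat N"
    and x_nz: "\<forall>n\<in>{1..N}. xco q L t1 t2 l1 h2 h1 l2 a1 a2 b n \<noteq> 0"
    and E: "cpoly q L t1 t2 l1 h2 h1 l2 a1 a2 b N E = 0"
    and s: "s \<noteq> 0"
    and down: "(s - q * (qpw L (h1 - 1/2) * t1)) * G (s / q) = \<kappa>\<^sub>d * (s - q * (qpw L (l1 - 1/2) * t1)) * G s"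
    and up: "(s - qpw L (l1 - 1/2) * t1) * G (q * s) = \<kappa>\<^sub>u * (s - qpw L (h1 - 1/2) * t1) * G s"
    and \<kappa>\<^sub>d: "\<kappa>\<^sub>d = qpw L (a2 + of_nat N)"
    and \<kappa>\<^sub>u: "qpw L (a1 + a2) * \<kappa>\<^sub>u = qpw L (a1 - of_nat N)"
  defines "P \<equiv> \<lambda>w. \<Sum>n\<le>N. cn q L t1 t2 l1 h2 h1 l2 a1 a2 b E n * w ^ n"
  shows "A4 q L t1 t2 h1 h2 l1 l2 a1 a2 b (\<lambda>w. G w * P w) s = E * (G s * P s)"
proof -
  have "A4 q L t1 t2 h1 h2 l1 l2 a1 a2 b (\<lambda>w. G w * P w) s - E * (G s * P s)
      = G s / s * (gauged_A4 q L t1 t2 h1 h2 l1 l2 a1 a2 b \<kappa>\<^sub>d (qpw L (a1 + a2) * \<kappa>\<^sub>u) P s - E * s * P s)"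
    by (rule A4_gauge_transform[OF Lq s down up])
  also have "\<dots> = 0"
    unfolding \<kappa>\<^sub>d \<kappa>\<^sub>u P_def gauged_A4_cn_poly[OF Lq N x_nz E] by simp
  finally show ?thesis
    by simp
qed

lemma A4_eigenfunction_gauge:
  fixes g :: "complex \<Rightarrow> complex"
  assumes q: "cmod q < 1" and Lq: "exp L = q" and t1: "t1 \<noteq> 0" and s: "s \<noteq> 0"
    and g: "\<And>z. z \<noteq> 0 \<Longrightarrow> g (q * z) = qpw L ((h1 + h2 - l1 - l2 - a1 - a2 - b + 2) / 2) * g z"
    and N: "(h1 - h2 - l1 + l2 + a1 - a2 + b - 2) / 2 = of_nat N"
    and x_nz: "\<forall>n\<in>{1..N}. xco q L t1 t2 l1 h2 h1 l2 a1 a2 b n \<noteq> 0"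
    and E: "cpoly q L t1 t2 l1 h2 h1 l2 a1 a2 b N E = 0"
    and den: "\<forall>w\<in>{s / q, s, q * s}. qpoch_inf q (w / (qpw L (h1 - 1/2) * t1)) \<noteq> 0"
  defines "P \<equiv> \<lambda>w. \<Sum>n\<le>N. cn q L t1 t2 l1 h2 h1 l2 a1 a2 b E n * w ^ n"
  shows "A4 q L t1 t2 h1 h2 l1 l2 a1 a2 b
      (\<lambda>w. g w * qpoch_inf q (w / (qpw L (l1 - 1/2) * t1)) / qpoch_inf q (w / (qpw L (h1 - 1/2) * t1)) * P w) s
    = E * (g s * qpoch_inf q (s / (qpw L (l1 - 1/2) * t1)) / qpoch_inf q (s / (qpw L (h1 - 1/2) * t1)) * P s)"
proof -
  define \<rho> where "\<rho> = (h1 + h2 - l1 - l2 - a1 - a2 - b + 2) / 2"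
  have exponent: "a2 + of_nat N = (h1 - 1/2) - (l1 - 1/2) - \<rho>"
    unfolding \<rho>_def N[symmetric] by (simp add: field_simps)
  have "q \<noteq> 0" "qpw L (l1 - 1/2) * t1 \<noteq> 0" "qpw L (h1 - 1/2) * t1 \<noteq> 0"
    using Lq t1 by auto
  note shifts = gauge_factor_shifts[where g = g and Q = "qpw L \<rho>", OF q this s qpw_nonzero g[folded \<rho>_def] den]
  have \<kappa>\<^sub>d: "qpw L (h1 - 1/2) * t1 / (qpw L (l1 - 1/2) * t1 * qpw L \<rho>) = qpw L (a2 + of_nat N)"
    unfolding exponent qpw_diff using t1 by simp
  have "qpw L (a1 - of_nat N) = qpw L (a1 + a2) / qpw L (a2 + of_nat N)"
    unfolding qpw_diff[symmetric] by (rule arg_cong[where f = "qpw L"]) simp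
  then have \<kappa>\<^sub>u: "qpw L (a1 + a2) * (qpw L \<rho> * (qpw L (l1 - 1/2) * t1) / (qpw L (h1 - 1/2) * t1))
      = qpw L (a1 - of_nat N)"
    unfolding \<kappa>\<^sub>d[symmetric] using t1 by (simp add: field_simps)
  show ?thesis
    unfolding P_def by (rule A4_eigenfunction_of_gauge_shifts[OF Lq N x_nz E s shifts \<kappa>\<^sub>d \<kappa>\<^sub>u])
qed

lemma A4_eigenfunction_reciprocal_gauge:
  fixes g :: "complex \<Rightarrow> complex"
  assumes q: "cmod q < 1" and Lq: "exp L = q" and s: "s \<noteq> 0"
    and g: "\<And>z. z \<noteq> 0 \<Longrightarrow> g (q * z) = qpw L (- a2 - of_nat N) * g z"
    and N: "(h1 - h2 - l1 + l2 + a1 - a2 + b - 2) / 2 = of_nat N"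
    and x_nz: "\<forall>n\<in>{1..N}. xco q L t1 t2 l1 h2 h1 l2 a1 a2 b n \<noteq> 0"
    and E: "cpoly q L t1 t2 l1 h2 h1 l2 a1 a2 b N E = 0"
    and den: "\<forall>w\<in>{s / q, s, q * s}. qpoch_inf q (qpw L (l1 + 1/2) * t1 / w) \<noteq> 0"
  defines "P \<equiv> \<lambda>w. \<Sum>n\<le>N. cn q L t1 t2 l1 h2 h1 l2 a1 a2 b E n * w ^ n"
  shows "A4 q L t1 t2 h1 h2 l1 l2 a1 a2 b
      (\<lambda>w. g w * qpoch_inf q (qpw L (h1 + 1/2) * t1 / w) / qpoch_inf q (qpw L (l1 + 1/2) * t1 / w) * P w) s
    = E * (g s * qpoch_inf q (qpw L (h1 + 1/2) * t1 / s) / qpoch_inf q (qpw L (l1 + 1/2) * t1 / s) * P s)"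
proof -
  have "q \<noteq> 0"
    using Lq by auto
  note shifts = reciprocal_gauge_factor_shifts[where g = g and Q = "qpw L (- a2 - of_nat N)"
      and v = "qpw L (h1 - 1/2) * t1", OF q this s qpw_nonzero g den[unfolded qpw_half_shift[OF Lq]]]
  have \<kappa>\<^sub>d: "1 / qpw L (- a2 - of_nat N) = qpw L (a2 + of_nat N)"
    by (simp add: qpw_def field_simps flip: exp_add)
  have \<kappa>\<^sub>u: "qpw L (a1 + a2) * qpw L (- a2 - of_nat N) = qpw L (a1 - of_nat N)"
    unfolding qpw_add[symmetric] by (rule arg_cong[where f = "qpw L"]) simp
  show ?thesis
    unfolding P_def qpw_half_shift[OF Lq] by (rule A4_eigenfunction_of_gauge_shifts[OF Lq N x_nz E s shifts \<kappa>\<^sub>d \<kappa>\<^sub>u])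
qed

theorem theorem3p2:
  fixes q L t1 t2 :: complex
    and pw :: "complex \<Rightarrow> complex \<Rightarrow> complex"
    and h1' h2' l1' l2' a1' a2' b' E0 s :: complex
    and N :: nat
  assumes q0: "0 < cmod q" and q1: "cmod q < 1" and Lq: "exp L = q"
    and t1: "t1 \<noteq> 0" and t2: "t2 \<noteq> 0"
    and pw_shift: "\<And>a z. z \<noteq> 0 \<Longrightarrow> pw a (q * z) = qpw L a * pw a z"
    and N_def: "(h1' - h2' - l1' + l2' + a1' - a2' + b' - 2) / 2 = of_nat N"
    and b_notin: "\<forall>n\<in>{1..N}. b' \<noteq> of_nat n"
    and x_def: "\<forall>n\<in>{1..N}. xco q L t1 t2 l1' h2' h1' l2' a1' a2' b' n \<noteq> 0"
    and E0: "cpoly q L t1 t2 l1' h2' h1' l2' a1' a2' b' N E0 = 0"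
    and s0: "s \<noteq> 0"
    and den1: "\<forall>w\<in>{s / q, s, q * s}. qpoch_inf q (w / (qpw L (h1' - 1/2) * t1)) \<noteq> 0"
    and den2: "\<forall>w\<in>{s / q, s, q * s}. qpoch_inf q (qpw L (l1' + 1/2) * t1 / w) \<noteq> 0"
  shows
    "let P = (\<lambda>w. \<Sum>n\<le>N. cn q L t1 t2 l1' h2' h1' l2' a1' a2' b' E0 n * w ^ n);
         f1 = (\<lambda>w. pw ((h1' + h2' - l1' - l2' - a1' - a2' - b' + 2) / 2) w
                  * qpoch_inf q (w / (qpw L (l1' - 1/2) * t1))
                  / qpoch_inf q (w / (qpw L (h1' - 1/2) * t1)) * P w);
         f2 = (\<lambda>w. pw (- a2' - of_nat N) w
                  * qpoch_inf q (qpw L (h1' + 1/2) * t1 / w)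
                  / qpoch_inf q (qpw L (l1' + 1/2) * t1 / w) * P w)
     in A4 q L t1 t2 h1' h2' l1' l2' a1' a2' b' f1 s = E0 * f1 s
      \<and> A4 q L t1 t2 h1' h2' l1' l2' a1' a2' b' f2 s = E0 * f2 s"
  unfolding Let_def
  using A4_eigenfunction_gauge[where g = "pw ((h1' + h2' - l1' - l2' - a1' - a2' - b' + 2) / 2)",
      OF q1 Lq t1 s0 pw_shift N_def x_def E0 den1]
    A4_eigenfunction_reciprocal_gauge[where g = "pw (- a2' - of_nat N)", OF q1 Lq s0 pw_shift N_def x_def E0 den2]
  by simp

end
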